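(* For a $*$-ring $R$ the following are equivalent: (1) $R$ is a generalized Rickart $*$-ring; (2) $R$ is a generalized weakly Rickart $*$-ring with unity.
   Context: A $*$-ring is an associative ring $R$ with an involution $x\mapsto x^*$ (additive, $(xy)^*=y^*x^*$, $x^{**}=x$). A projection is an element $e$ with $e=e^*=e^2$. For $a\in R$, $r(a)=\{b\in R: ab=0\}$. $R$ is a generalized Rickart $*$-ring if for every $x\in R$ there exist a positive integer $n$ and a projection $g$ with $r(x^n)=gR$. A projection $e$ is a generalized right projection of $x$ if there exists $n\in\mathbb N$ with $x^ne=x^n$ and, for all $y\in R$, $x^ny=0$ implies $ey=0$. $R$ is a generalized weakly Rickart $*$-ring if every element of $R$ has a generalized right projection. *)

theory Defs
  imports Main
begin

definition star_ring :: "('a::ring \<Rightarrow> 'a) \<Rightarrow> bool" where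
  "star_ring s \<longleftrightarrow>
     (\<forall>x y. s (x + y) = s x + s y) \<and>
     (\<forall>x y. s (x * y) = s y * s x) \<and>
     (\<forall>x. s (s x) = x)"

text \<open>Positive powers x^n (n >= 1) in a possibly non-unital ring; the value at 0 is irrelevant.\<close>
fun rpow :: "'a::ring \<Rightarrow> nat \<Rightarrow> 'a" where
  "rpow x 0 = 0"
| "rpow x (Suc 0) = x"
| "rpow x (Suc (Suc n)) = x * rpow x (Suc n)"

definition projection :: "('a::ring \<Rightarrow> 'a) \<Rightarrow> 'a \<Rightarrow> bool" where
  "projection s e \<longleftrightarrow> e = s e \<and> e = e * e"

definition right_ann :: "'a::ring \<Rightarrow> 'a set" where
  "right_ann a = {b. a * b = 0}"

definition gen_rickart :: "('a::ring \<Rightarrow> 'a) \<Rightarrow> bool" where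
  "gen_rickart s \<longleftrightarrow>
     (\<forall>x. \<exists>n>0. \<exists>g. projection s g \<and> right_ann (rpow x n) = {g * y | y. True})"

definition gen_right_projection :: "('a::ring \<Rightarrow> 'a) \<Rightarrow> 'a \<Rightarrow> 'a \<Rightarrow> bool" where
  "gen_right_projection s e x \<longleftrightarrow> projection s e \<and>
     (\<exists>n>0. rpow x n * e = rpow x n \<and> (\<forall>y. rpow x n * y = 0 \<longrightarrow> e * y = 0))"

definition gen_weakly_rickart :: "('a::ring \<Rightarrow> 'a) \<Rightarrow> bool" where
  "gen_weakly_rickart s \<longleftrightarrow> (\<forall>x. \<exists>e. gen_right_projection s e x)"

end

theory Submission
  imports Defs
begin

text \<open>The generalized right projection of x is the complement 1 - g of the projection g
  with r(x^n) = gR, and conversely. The unity comes for free in a generalized Rickart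
  *-ring: for x = 0 the annihilator r(0^n) is all of R, so R = gR makes g a left unity,
  and since g is self-adjoint it is a two-sided one.\<close>

definition is_unity :: "'a::ring \<Rightarrow> bool" where
  "is_unity u \<longleftrightarrow> (\<forall>x. u * x = x \<and> x * u = x)"

lemma rpow_zero_Suc: "rpow (0::'a::ring) (Suc n) = 0"
  by (induction n) auto

lemma rpow_zero: "n > 0 \<Longrightarrow> rpow (0::'a::ring) n = 0"
  using rpow_zero_Suc by (cases n) auto

lemma star_ring_diff:
  assumes "star_ring s"
  shows "s (a - b) = s a - s b"
proof -
  have add: "\<And>x y. s (x + y) = s x + s y"
    using assms unfolding star_ring_def by blast
  then have "s (a - b) + s b = s a"
    by (metis diff_add_cancel)
  then show ?thesis
    by (simp add: eq_diff_eq)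
qed

lemma star_ring_unity_self_adjoint:
  assumes "star_ring s" and "is_unity u"
  shows "s u = u"
proof -
  have "s u = s (s u * u)"
    using assms unfolding star_ring_def is_unity_def by metis
  also have "\<dots> = s u * s (s u)"
    using assms(1) unfolding star_ring_def by blast
  also have "\<dots> = u"
    using assms unfolding star_ring_def is_unity_def by metis
  finally show ?thesis .
qed

lemma projection_unity_diff:
  assumes "star_ring s" and "is_unity u" and "projection s e"
  shows "projection s (u - e)"
proof -
  have ee: "e * e = e" and se: "s e = e"
    using assms(3) unfolding projection_def by simp_all
  have "(u - e) * (u - e) = u * u - e * u - u * e + e * e"
    by (simp add: algebra_simps)
  also have "\<dots> = u - e"
    using assms(2) ee unfolding is_unity_def by simp
  finally show ?thesis
    unfolding projection_def
    using star_ring_diff[OF assms(1)] star_ring_unity_self_adjoint[OF assms(1,2)] se by simp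
qed

lemma right_ann_eq_principal_iff:
  assumes "is_unity u" and "h * h = h"
  shows "right_ann a = {h * y | y. True} \<longleftrightarrow>
           a * (u - h) = a \<and> (\<forall>y. a * y = 0 \<longrightarrow> (u - h) * y = 0)"
proof -
  have ul: "\<And>x. u * x = x" and ur: "\<And>x. x * u = x"
    using assms(1) unfolding is_unity_def by simp_all
  have complement_kills_h: "(u - h) * (h * z) = 0" for z
    using assms(2) ul by (simp add: left_diff_distrib mult.assoc[symmetric])
  show ?thesis
  proof
    assume ann: "right_ann a = {h * y | y. True}"
    have "h \<in> right_ann a"
      using ann assms(2) by (metis (mono_tags, lifting) mem_Collect_eq)
    then have "a * (u - h) = a"
      by (simp add: right_ann_def right_diff_distrib ur)
    moreover have "(u - h) * y = 0" if "a * y = 0" for y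
    proof -
      obtain z where "y = h * z"
        using \<open>a * y = 0\<close> ann unfolding right_ann_def by blast
      then show ?thesis
        using complement_kills_h by simp
    qed
    ultimately show "a * (u - h) = a \<and> (\<forall>y. a * y = 0 \<longrightarrow> (u - h) * y = 0)"
      by blast
  next
    assume proj: "a * (u - h) = a \<and> (\<forall>y. a * y = 0 \<longrightarrow> (u - h) * y = 0)"
    have "a * h = 0"
      using proj ur by (simp add: right_diff_distrib)
    show "right_ann a = {h * y | y. True}"
    proof (intro set_eqI iffI)
      fix y
      assume "y \<in> right_ann a"
      then have "y = h * y"
        using proj ul by (simp add: right_ann_def left_diff_distrib)
      then show "y \<in> {h * y | y. True}"
        by blast
    next
      fix y
      assume "y \<in> {h * y | y. True}"
      then show "y \<in> right_ann a"
        using \<open>a * h = 0\<close> by (auto simp: right_ann_def mult.assoc[symmetric])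
    qed
  qed
qed

lemma gen_rickart_has_unity:
  fixes s :: "'a::ring \<Rightarrow> 'a"
  assumes "star_ring s" and "gen_rickart s"
  shows "\<exists>u::'a. is_unity u"
proof -
  obtain n g where "n > 0" and g: "projection s g"
    and ann: "right_ann (rpow (0::'a) n) = {g * y | y. True}"
    using assms(2) unfolding gen_rickart_def by blast
  have left: "g * y = y" for y
  proof -
    have "y \<in> right_ann (rpow (0::'a) n)"
      by (simp add: right_ann_def rpow_zero[OF \<open>n > 0\<close>])
    then obtain z where "y = g * z"
      using ann by blast
    then show ?thesis
      using g unfolding projection_def by (metis mult.assoc)
  qed
  have right: "y * g = y" for y
  proof -
    have "s (y * g) = s g * s y"
      using assms(1) unfolding star_ring_def by blast
    also have "\<dots> = s y"
      using g left unfolding projection_def by simp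
    finally show ?thesis
      using assms(1) unfolding star_ring_def by metis
  qed
  show ?thesis
    using left right unfolding is_unity_def by blast
qed

lemma gen_rickart_imp_gen_weakly_rickart:
  fixes s :: "'a::ring \<Rightarrow> 'a" and u :: 'a
  assumes "star_ring s" and "is_unity u" and "gen_rickart s"
  shows "gen_weakly_rickart s"
  unfolding gen_weakly_rickart_def
proof
  fix x
  obtain n h where "n > 0" and h: "projection s h"
    and "right_ann (rpow x n) = {h * y | y. True}"
    using assms(3) unfolding gen_rickart_def by blast
  then have "rpow x n * (u - h) = rpow x n \<and>
               (\<forall>y. rpow x n * y = 0 \<longrightarrow> (u - h) * y = 0)"
    using right_ann_eq_principal_iff[OF assms(2)] unfolding projection_def by metis
  then have "gen_right_projection s (u - h) x"
    unfolding gen_right_projection_def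
    using \<open>n > 0\<close> projection_unity_diff[OF assms(1,2) h] by blast
  then show "\<exists>e. gen_right_projection s e x" ..
qed

lemma gen_weakly_rickart_imp_gen_rickart:
  fixes s :: "'a::ring \<Rightarrow> 'a" and u :: 'a
  assumes "star_ring s" and "is_unity u" and "gen_weakly_rickart s"
  shows "gen_rickart s"
  unfolding gen_rickart_def
proof
  fix x
  obtain e n where e: "projection s e" and "n > 0"
    and "rpow x n * e = rpow x n" and "\<forall>y. rpow x n * y = 0 \<longrightarrow> e * y = 0"
    using assms(3) unfolding gen_weakly_rickart_def gen_right_projection_def by blast
  moreover have "projection s (u - e)"
    using projection_unity_diff[OF assms(1,2) e] .
  moreover have "u - (u - e) = e"
    by simp
  ultimately have "right_ann (rpow x n) = {(u - e) * y | y. True}"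
    using right_ann_eq_principal_iff[OF assms(2), of "u - e"]
    unfolding projection_def by metis
  then show "\<exists>n>0. \<exists>g. projection s g \<and> right_ann (rpow x n) = {g * y | y. True}"
    using \<open>n > 0\<close> \<open>projection s (u - e)\<close> by blast
qed

theorem mainTheorem8:
  fixes s :: "'a::ring \<Rightarrow> 'a"
  assumes "star_ring s"
  shows "gen_rickart s \<longleftrightarrow>
           (gen_weakly_rickart s \<and> (\<exists>u::'a. \<forall>x. u * x = x \<and> x * u = x))"
  using gen_rickart_has_unity[OF assms] gen_rickart_imp_gen_weakly_rickart[OF assms]
    gen_weakly_rickart_imp_gen_rickart[OF assms]
  unfolding is_unity_def by blast

end
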